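(* For $j\ge1$, let $p^{(n)}_j$ be the probability that a random straight line meets $\Pi_n$ in exactly $j$ points, given that it meets $\Pi_n$. Let $$h_n=-\sum_j p^{(n)}_j\log p^{(n)}_j$$ be the associated entropy. Then $$\limsup_{n\to\infty}\frac{h_n}{n}\le \log\left(\frac{2+\sqrt5}{1+\sqrt2}\right).$$
   Context: Work over the alphabet $\{L,R\}$. Let $\bar w$ denote the word $w$ with $L$ and $R$ exchanged, and let $\varepsilon$ be the empty word. Define words $q_n$ by $$q_0=\varepsilon,\qquad q_1=R,\qquad q_n=q_{n-1}q_{n-2}\ \text{ if } n\equiv 2 \pmod 3,\qquad q_n=q_{n-1}\overline{q_{n-2}}\ \text{ if } n\equiv 0,1 \pmod 3\quad (n\ge 2).$$ A word $w=w_1\cdots w_k$ encodes a lattice path in $\mathbb Z^2$ of $k+1$ unit segments: the path starts with a unit step, and after the $i$-th step it turns $90^\circ$ left if $w_i=L$ and $90^\circ$ right if $w_i=R$, then takes the next unit step. For a nonempty word $w$, let $w^{-}$ be $w$ with its last letter removed. The Fibonacci polygon $\Pi_n$ is the path encoded by $\big((q_{3n+1})^4\big)^{-}$. It is a closed non-self-intersecting polygon of $4|q_{3n+1}|$ unit segments. A straight line is written $x\cos\theta+y\sin\theta=\rho$ with $(\theta,\rho)\in[0,\pi)\times\mathbb R$. Probabilities refer to the measure $d\rho\,d\theta$ restricted to the set of lines meeting $\Pi_n$, normalized to a probability measure. Lines meeting $\Pi_n$ in infinitely many points form a null set and are ignored. The convention $0\log 0=0$ is used. *)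

theory Defs
  imports "HOL-Analysis.Analysis"
begin

datatype letter = L | R

definition flipw :: "letter list \<Rightarrow> letter list" where
  "flipw w = map (\<lambda>c. case c of L \<Rightarrow> R | R \<Rightarrow> L) w"

fun q :: "nat \<Rightarrow> letter list" where
  "q 0 = []"
| "q (Suc 0) = [R]"
| "q (Suc (Suc n)) =
     (if Suc (Suc n) mod 3 = 2 then q (Suc n) @ q n else q (Suc n) @ flipw (q n))"

text \<open>Lattice path in the complex plane: start at 0 with a unit step in direction 1;
  after the i-th step turn left (multiply direction by i) on L, right (by -i) on R.\<close>
fun heading :: "letter list \<Rightarrow> nat \<Rightarrow> complex" where
  "heading w 0 = 1"
| "heading w (Suc i) = heading w i * (if w ! i = L then \<i> else - \<i>)"

definition vert :: "letter list \<Rightarrow> nat \<Rightarrow> complex" where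
  "vert w k = (\<Sum>i<k. heading w i)"

text \<open>The point set of the path encoded by w: |w|+1 unit segments.\<close>
definition path_set :: "letter list \<Rightarrow> complex set" where
  "path_set w = (\<Union>i\<le>length w. closed_segment (vert w i) (vert w (Suc i)))"

definition Pi_poly :: "nat \<Rightarrow> complex set" where
  "Pi_poly n = path_set (butlast (concat (replicate 4 (q (3 * n + 1)))))"

definition line :: "real \<Rightarrow> real \<Rightarrow> complex set" where
  "line \<theta> \<rho> = {z. Re z * cos \<theta> + Im z * sin \<theta> = \<rho>}"

definition meeting_lines :: "nat \<Rightarrow> (real \<times> real) set" where
  "meeting_lines n = {(\<theta>, \<rho>). 0 \<le> \<theta> \<and> \<theta> < pi \<and> line \<theta> \<rho> \<inter> Pi_poly n \<noteq> {}}"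

definition pj :: "nat \<Rightarrow> nat \<Rightarrow> real" where
  "pj n j = measure lborel {(\<theta>, \<rho>) \<in> meeting_lines n.
              finite (line \<theta> \<rho> \<inter> Pi_poly n) \<and> card (line \<theta> \<rho> \<inter> Pi_poly n) = j}
            / measure lborel (meeting_lines n)"

text \<open>Entropy over j \<ge> 1, with 0 log 0 = 0 (automatic since 0 * x = 0).\<close>
definition hn :: "nat \<Rightarrow> real" where
  "hn n = - (\<Sum>j. pj n (Suc j) * ln (pj n (Suc j)))"

end

theory Submission
  imports Defs
begin

text \<open>
  The entropy \<open>h\<^sub>n\<close> of the number of intersection points of a random line with the Fibonacci
  polygon \<open>\<Pi>\<^sub>n\<close> is bounded via the mean of that number.  A distribution on \<open>{1, 2, \<dots>}\<close>
  with mean at most \<open>\<mu>\<close> has entropy at most \<open>3 + ln \<mu>\<close> (comparison with a geometric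
  distribution), so it suffices to show that the mean grows at most like
  \<open>((2 + \<surd>5) / (1 + \<surd>2))\<^sup>n\<close>.  The mean is (total length of \<open>\<Pi>\<^sub>n\<close>) / (measure of the lines
  meeting \<open>\<Pi>\<^sub>n\<close>), up to a Crofton-type factor:

  \<^item> Upper bound on the numerator: \<open>|q\<^sub>m|\<close> satisfies the Fibonacci recursion, so
    \<open>|\<Pi>\<^sub>n| = 4 |q\<^sub>3\<^sub>n\<^sub>+\<^sub>1| \<le> 4 \<phi>\<^sup>3\<^sup>n\<^sup>+\<^sup>1\<close> with \<open>\<phi>\<^sup>3 = 2 + \<surd>5\<close>; a line meeting a unit segment
    starting at \<open>v\<close> lies in a strip around \<open>v\<close> of measure \<open>2\<pi>\<close>, and it meets each segment at
    most once.
  \<^item> Lower bound on the denominator: the path of \<open>q\<^sub>3\<^sub>n\<^sub>+\<^sub>1\<close> ends at \<open>P\<^sub>n\<^sub>+\<^sub>1 \<plusminus> i P\<^sub>n\<close> with Pell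
    numbers \<open>P\<^sub>n \<ge> (1 + \<surd>2)\<^sup>n\<^sup>-\<^sup>1 / 2\<close>; since \<open>\<Pi>\<^sub>n\<close> is connected and contains \<open>0\<close> and this point, it
    meets every line of a box of measure proportional to \<open>P\<^sub>n\<^sub>+\<^sub>1\<close>.
\<close>

section \<open>Turtle paths: concatenation and reflection\<close>

lemma heading_append_prefix: "i \<le> length u \<Longrightarrow> heading (u @ v) i = heading u i"
  by (induction i) (auto simp: nth_append)

lemma vert_append_prefix: "k \<le> length u \<Longrightarrow> vert (u @ v) k = vert u k"
  unfolding vert_def by (auto intro!: sum.cong simp: heading_append_prefix)

lemma vert_Suc: "vert w (Suc k) = vert w k + heading w k"
  by (simp add: vert_def)

lemma norm_heading: "norm (heading w i) = 1"
  by (induction i) (auto simp: norm_mult)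

definition endpoint :: "letter list \<Rightarrow> complex" where
  "endpoint w = vert w (length w)"

definition end_heading :: "letter list \<Rightarrow> complex" where
  "end_heading w = heading w (length w)"

lemma heading_append: "heading (u @ v) (length u + i) = end_heading u * heading v i"
  by (induction i) (auto simp: nth_append heading_append_prefix end_heading_def)

lemma vert_append: "vert (u @ v) (length u + i) = endpoint u + end_heading u * vert v i"
proof (induction i)
  case 0
  then show ?case by (simp add: vert_append_prefix endpoint_def) (simp add: vert_def)
next
  case (Suc i)
  then show ?case
    using vert_Suc[of "u @ v" "length u + i"] heading_append[of u v i]
    by (simp add: vert_Suc distrib_left)
qed

lemma endpoint_append: "endpoint (u @ v) = endpoint u + end_heading u * endpoint v"
  using vert_append[of u v "length v"] by (simp add: endpoint_def)

lemma end_heading_append: "end_heading (u @ v) = end_heading u * end_heading v"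
  using heading_append[of u v "length v"] by (simp add: end_heading_def)

lemma length_flipw [simp]: "length (flipw v) = length v"
  by (simp add: flipw_def)

lemma heading_flipw: "i \<le> length v \<Longrightarrow> heading (flipw v) i = cnj (heading v i)"
proof (induction i)
  case (Suc i)
  then show ?case by (cases "v ! i") (auto simp: flipw_def)
qed simp

lemma endpoint_flipw: "endpoint (flipw v) = cnj (endpoint v)"
  by (simp add: endpoint_def vert_def heading_flipw)

lemma end_heading_flipw: "end_heading (flipw v) = cnj (end_heading v)"
  by (simp add: end_heading_def heading_flipw)

section \<open>The words \<open>q\<^sub>n\<close>: lengths and end points\<close>

lemma q_Suc_Suc:
  "Suc (Suc m) mod 3 = 2 \<Longrightarrow> q (Suc (Suc m)) = q (Suc m) @ q m"
  "Suc (Suc m) mod 3 \<noteq> 2 \<Longrightarrow> q (Suc (Suc m)) = q (Suc m) @ flipw (q m)"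
  by simp_all

lemma q_period:
  "q (3*n + 2) = q (3*n + 1) @ q (3*n)"
  "q (3*n + 3) = q (3*n + 2) @ flipw (q (3*n + 1))"
  "q (3*n + 4) = q (3*n + 3) @ flipw (q (3*n + 2))"
proof -
  have mod3: "Suc (Suc (3*n)) mod 3 = 2" "Suc (Suc (3*n + 1)) mod 3 \<noteq> 2"
      "Suc (Suc (3*n + 2)) mod 3 \<noteq> 2"
    by presburger+
  have idx: "Suc (3*n) = 3*n + 1" "Suc (3*n + 1) = 3*n + 2" "Suc (3*n + 2) = 3*n + 3"
      "Suc (3*n + 3) = 3*n + 4"
    by simp_all
  show "q (3*n + 2) = q (3*n + 1) @ q (3*n)"
    using q_Suc_Suc(1)[OF mod3(1)] by (simp only: idx)
  show "q (3*n + 3) = q (3*n + 2) @ flipw (q (3*n + 1))"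
    using q_Suc_Suc(2)[OF mod3(2)] by (simp only: idx)
  show "q (3*n + 4) = q (3*n + 3) @ flipw (q (3*n + 2))"
    using q_Suc_Suc(2)[OF mod3(3)] by (simp only: idx)
qed

fun pell :: "nat \<Rightarrow> real" where
  "pell 0 = 0"
| "pell (Suc 0) = 1"
| "pell (Suc (Suc n)) = 2 * pell (Suc n) + pell n"

text \<open>One period of the recursion multiplies the end point roughly by \<open>1 + \<surd>2\<close>:
  \<open>q\<^sub>3\<^sub>n\<close> ends at \<open>P\<^sub>n (1 \<plusminus> i)\<close> heading east, \<open>q\<^sub>3\<^sub>n\<^sub>+\<^sub>1\<close> ends at \<open>P\<^sub>n\<^sub>+\<^sub>1 \<plusminus> i P\<^sub>n\<close>.\<close>
lemma q_endpoints:
  "endpoint (q (3*n)) = pell n * (1 + \<i> * (-1)^n) \<and> end_heading (q (3*n)) = 1 \<and>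
   endpoint (q (3*n + 1)) = pell (n + 1) + \<i> * (-1)^n * pell n \<and>
   end_heading (q (3*n + 1)) = - \<i> * (-1)^n"
proof (induction n)
  case 0
  then show ?case by (simp add: endpoint_def end_heading_def vert_def)
next
  case (Suc n)
  define s :: complex where "s = (-1)^n"
  define a :: complex where "a = pell (n + 1)"
  define b :: complex where "b = pell n"
  have s: "s * s = 1" "cnj s = s"
    by (simp_all add: s_def power_mult_distrib[symmetric])
  have i2: "\<i> * \<i> = -1"
    by simp
  have ab: "cnj a = a" "cnj b = b"
    by (simp_all add: a_def b_def)
  have IH: "endpoint (q (3*n)) = b * (1 + \<i> * s)" "end_heading (q (3*n)) = 1"
    "endpoint (q (3*n + 1)) = a + \<i> * s * b" "end_heading (q (3*n + 1)) = - \<i> * s"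
    using Suc by (auto simp: s_def a_def b_def)
  have q2: "endpoint (q (3*n + 2)) = a + b" "end_heading (q (3*n + 2)) = - \<i> * s"
    unfolding q_period endpoint_append end_heading_append IH using s by (simp_all add: algebra_simps)
  have "endpoint (q (3*n + 3)) = (a + b) + (- \<i> * s) * (a - \<i> * s * b)"
    unfolding q_period(2) endpoint_append endpoint_flipw q2 IH by (simp add: ab s)
  also have "\<dots> = a * (1 - \<i> * s)"
    using s i2 by algebra
  finally have q3_end: "endpoint (q (3*n + 3)) = a * (1 - \<i> * s)" .
  have "end_heading (q (3*n + 3)) = (- \<i> * s) * (\<i> * s)"
    unfolding q_period(2) end_heading_append end_heading_flipw q2 IH by (simp add: s)
  then have q3_head: "end_heading (q (3*n + 3)) = 1"
    using s i2 by algebra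
  note q3 = q3_end q3_head
  have q4: "endpoint (q (3*n + 4)) = 2 * a + b - \<i> * s * a" "end_heading (q (3*n + 4)) = \<i> * s"
    unfolding q_period(3) endpoint_append end_heading_append endpoint_flipw end_heading_flipw q2 q3
    using s by (simp_all add: ab algebra_simps)
  have idx: "3 * Suc n = 3*n + 3" "3*n + 3 + 1 = 3*n + 4"
    by simp_all
  show ?case
    unfolding idx q3 q4 by (simp add: s_def a_def b_def algebra_simps)
qed

lemma length_q_Suc_Suc: "length (q (Suc (Suc m))) = length (q (Suc m)) + length (q m)"
  by (simp add: flipw_def)

lemma length_q_pos: "m \<ge> 1 \<Longrightarrow> length (q m) \<ge> 1"
proof -
  have "length (q (Suc m)) \<ge> 1 \<and> length (q (Suc (Suc m))) \<ge> 1" for m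
    by (induction m) (simp_all add: length_q_Suc_Suc del: q.simps(3))
  then show "m \<ge> 1 \<Longrightarrow> length (q m) \<ge> 1"
    by (cases m) auto
qed

definition phi :: real where
  "phi = (1 + sqrt 5) / 2"

lemma phi_squared: "phi\<^sup>2 = phi + 1"
  by (simp add: phi_def power2_eq_square field_simps)

lemma phi_cubed: "phi ^ 3 = 2 + sqrt 5"
proof -
  have "phi ^ 3 = 2 * phi + 1"
    using phi_squared by (simp add: power3_eq_cube power2_eq_square algebra_simps)
  then show ?thesis by (simp add: phi_def)
qed

text \<open>The lengths satisfy the Fibonacci recursion, hence grow at most like \<open>\<phi>\<^sup>m\<close>.\<close>
lemma length_q_le: "real (length (q m)) \<le> phi ^ m"
proof -
  have phi1: "phi \<ge> 1"
    unfolding phi_def using real_sqrt_ge_one[of 5] by simp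
  have "real (length (q m)) \<le> phi ^ m \<and> real (length (q (Suc m))) \<le> phi ^ Suc m" for m
  proof (induction m)
    case (Suc m)
    have "real (length (q (Suc (Suc m)))) \<le> phi ^ Suc m + phi ^ m"
      using Suc by (simp add: length_q_Suc_Suc del: q.simps)
    also have "\<dots> = phi ^ m * (phi + 1)"
      by (simp add: algebra_simps)
    also have "\<dots> = phi ^ Suc (Suc m)"
      using phi_squared by (simp add: power2_eq_square)
    finally show ?case using Suc by simp
  qed (use phi1 in simp)
  then show ?thesis by blast
qed

lemma pell_growth:
  "0 \<le> pell n \<and> pell n \<le> pell (Suc n) \<and> (1 + sqrt 2) ^ n / 2 \<le> pell (Suc n) \<and>
   (1 + sqrt 2) ^ Suc n / 2 \<le> pell (Suc (Suc n))"
proof (induction n)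
  case 0
  have "sqrt 2 \<le> sqrt (2\<^sup>2)"
    by (rule real_sqrt_le_mono) simp
  then show ?case by simp
next
  case (Suc n)
  have "(1 + sqrt 2) ^ Suc (Suc n) / 2 = 2 * ((1 + sqrt 2) ^ Suc n / 2) + (1 + sqrt 2) ^ n / 2"
    by (simp add: algebra_simps)
  also have "\<dots> \<le> 2 * pell (Suc (Suc n)) + pell (Suc n)"
    using Suc by simp
  finally show ?case using Suc by simp
qed

section \<open>The polygon \<open>\<Pi>\<^sub>n\<close> and the lines meeting it\<close>

definition polygon_word :: "nat \<Rightarrow> letter list" where
  "polygon_word n = butlast (concat (replicate 4 (q (3*n + 1))))"

lemma Pi_poly_eq: "Pi_poly n = path_set (polygon_word n)"
  by (simp add: Pi_poly_def polygon_word_def)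

lemma polygon_word_eq:
  "polygon_word n = q (3*n + 1) @ butlast (q (3*n + 1) @ q (3*n + 1) @ q (3*n + 1))"
proof -
  have "q (3*n + 1) @ q (3*n + 1) @ q (3*n + 1) \<noteq> []"
    using length_q_pos[of "3*n + 1"] by auto
  then show ?thesis
    unfolding polygon_word_def by (simp add: numeral_eq_Suc butlast_append)
qed

lemma length_polygon_word: "length (polygon_word n) + 1 = 4 * length (q (3*n + 1))"
  using length_q_pos[of "3*n + 1"] by (simp add: polygon_word_eq)

lemma connected_segment_chain:
  fixes v :: "nat \<Rightarrow> 'a::real_normed_vector"
  shows "connected (\<Union>i\<le>k. closed_segment (v i) (v (Suc i)))"
proof (induction k)
  case (Suc k)
  have "(\<Union>i\<le>Suc k. closed_segment (v i) (v (Suc i))) =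
     (\<Union>i\<le>k. closed_segment (v i) (v (Suc i))) \<union> closed_segment (v (Suc k)) (v (Suc (Suc k)))"
    by (auto simp: atMost_Suc)
  moreover have "v (Suc k) \<in> (\<Union>i\<le>k. closed_segment (v i) (v (Suc i)))"
    by auto
  ultimately show ?case
    using Suc by (metis connected_Un connected_segment disjoint_iff ends_in_segment(1))
qed simp

lemma vert_in_path_set: "k \<le> length w \<Longrightarrow> vert w k \<in> path_set w"
  unfolding path_set_def by auto

lemma polygon_contains:
  "connected (Pi_poly n)" "0 \<in> Pi_poly n" "endpoint (q (3*n + 1)) \<in> Pi_poly n"
proof -
  show "connected (Pi_poly n)"
    unfolding Pi_poly_eq path_set_def by (rule connected_segment_chain)
  show "0 \<in> Pi_poly n"
    using vert_in_path_set[of 0 "polygon_word n"] by (simp add: Pi_poly_eq vert_def)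
  have "length (q (3*n + 1)) \<le> length (polygon_word n)"
    by (simp add: polygon_word_eq)
  moreover have "vert (polygon_word n) (length (q (3*n + 1))) = endpoint (q (3*n + 1))"
    unfolding polygon_word_eq endpoint_def by (simp add: vert_append_prefix)
  ultimately show "endpoint (q (3*n + 1)) \<in> Pi_poly n"
    using vert_in_path_set Pi_poly_eq by metis
qed

lemma line_eq: "line \<theta> \<rho> = {z. z \<bullet> cis \<theta> = \<rho>}"
  by (simp add: line_def inner_complex_def)

text \<open>Lower bound for the measure of lines meeting a connected set: if the set contains
  \<open>0\<close> and a point \<open>P\<close> with \<open>|Im P| \<le> Re P\<close>, it is met by every line with direction
  \<open>\<theta> \<in> [0, \<pi>/6]\<close> and distance \<open>\<rho> \<in> [0, c Re P]\<close> where \<open>c = (\<surd>3 - 1)/2\<close>, by the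
  intermediate value theorem.\<close>
lemma connected_meets_line:
  fixes S :: "complex set"
  assumes S: "connected S" "0 \<in> S" "P \<in> S" and P: "\<bar>Im P\<bar> \<le> Re P"
    and \<theta>: "0 \<le> \<theta>" "\<theta> \<le> pi / 6" and \<rho>: "0 \<le> \<rho>" "\<rho> \<le> (sqrt 3 - 1) / 2 * Re P"
  shows "line \<theta> \<rho> \<inter> S \<noteq> {}"
proof -
  have cos: "sqrt 3 / 2 \<le> cos \<theta>"
    using cos_monotone_0_pi_le[of \<theta> "pi / 6"] \<theta> cos_30 by simp
  have sin: "0 \<le> sin \<theta>" "sin \<theta> \<le> 1 / 2"
    using sin_monotone_2pi_le[of \<theta> "pi / 6"] \<theta> sin_30 by (auto intro: sin_ge_zero)
  have "Re P * (sqrt 3 / 2) \<le> Re P * cos \<theta>"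
    using cos P by (intro mult_left_mono) auto
  moreover have "Re P * sin \<theta> \<le> Re P * (1 / 2)"
    using sin P by (intro mult_left_mono) auto
  moreover have "- (Re P * sin \<theta>) \<le> Im P * sin \<theta>"
    using P sin by (metis abs_ge_minus_self abs_mult_pos minus_le_iff mult_right_mono order.trans)
  ultimately have "(sqrt 3 - 1) / 2 * Re P \<le> P \<bullet> cis \<theta>"
    by (simp add: inner_complex_def algebra_simps)
  then obtain z where "z \<in> S" "z \<bullet> cis \<theta> = \<rho>"
    using connected_ivt_component[of S 0 P "cis \<theta>" \<rho>] S \<rho> by auto
  then show ?thesis
    by (auto simp: line_eq)
qed

lemma box_subset_meeting_lines:
  "{0..pi/6} \<times> {0..(sqrt 3 - 1) / 2 * pell (Suc n)} \<subseteq> meeting_lines n"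
proof clarify
  fix \<theta> \<rho> :: real
  assume \<theta>: "\<theta> \<in> {0..pi/6}" and \<rho>: "\<rho> \<in> {0..(sqrt 3 - 1) / 2 * pell (Suc n)}"
  have "Re (endpoint (q (3*n + 1))) = pell (Suc n)"
    "\<bar>Im (endpoint (q (3*n + 1)))\<bar> \<le> pell (Suc n)"
    using q_endpoints[of n] pell_growth[of n] by (simp_all add: abs_mult)
  then have "line \<theta> \<rho> \<inter> Pi_poly n \<noteq> {}"
    using \<theta> \<rho> by (intro connected_meets_line[OF polygon_contains]) auto
  moreover have "0 \<le> \<theta>" "\<theta> \<le> pi / 6"
    using \<theta> by auto
  moreover have "\<theta> < pi"
    using \<open>\<theta> \<le> pi / 6\<close> pi_gt_zero by linarith
  ultimately show "(\<theta>, \<rho>) \<in> meeting_lines n"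
    by (simp add: meeting_lines_def)
qed

lemma measure_meeting_lines_ge:
  assumes pos: "measure lborel (meeting_lines n) > 0"
  shows "pi / 6 * ((sqrt 3 - 1) / 2 * pell (Suc n)) \<le> measure lborel (meeting_lines n)"
proof -
  let ?box = "{0..pi/6} \<times> {0..(sqrt 3 - 1) / 2 * pell (Suc n)}"
  have c: "0 \<le> (sqrt 3 - 1) / 2 * pell (Suc n)"
    using pell_growth[of n] real_sqrt_ge_one[of 3] by simp
  have "ennreal (pi / 6 * ((sqrt 3 - 1) / 2 * pell (Suc n))) =
      ennreal (pi / 6) * ennreal ((sqrt 3 - 1) / 2 * pell (Suc n))"
    using c by (intro ennreal_mult) auto
  then have box: "emeasure lborel ?box = ennreal (pi / 6 * ((sqrt 3 - 1) / 2 * pell (Suc n)))"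
    using c by (simp add: lborel_prod[symmetric] lborel.emeasure_pair_measure_Times)
  have "emeasure lborel ?box \<le> emeasure lborel (meeting_lines n)"
    using box_subset_meeting_lines pos measure_notin_sets by (intro emeasure_mono) fastforce+
  also have "\<dots> = ennreal (measure lborel (meeting_lines n))"
    using pos by (intro emeasure_eq_ennreal_measure) (auto simp: measure_def)
  finally show ?thesis
    unfolding box by (simp add: ennreal_le_iff)
qed

section \<open>Counting intersections with unit strips\<close>

text \<open>The lines \<open>(\<theta>, \<rho>)\<close> passing within distance \<open>1\<close> of the point \<open>v\<close>: for each
  \<open>\<theta> \<in> [0, \<pi>]\<close> an interval of \<open>\<rho>\<close> of length \<open>2\<close>.\<close>
definition strip :: "complex \<Rightarrow> (real \<times> real) set" where
  "strip v = {x. 0 \<le> fst x \<and> fst x \<le> pi \<and> \<bar>snd x - v \<bullet> cis (fst x)\<bar> \<le> 1}"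

lemma strip_sets: "strip v \<in> sets lborel"
proof -
  have "closed (strip v)"
    unfolding strip_def inner_complex_def
    by (intro closed_Collect_conj closed_Collect_le continuous_intros)
  then show ?thesis
    by (simp add: sets_lborel)
qed

lemma emeasure_strip: "emeasure lborel (strip v) = ennreal (2 * pi)"
proof -
  have slice: "Pair t -` strip v =
      (if t \<in> {0..pi} then {v \<bullet> cis t - 1 .. v \<bullet> cis t + 1} else {})" for t
    by (auto simp: strip_def abs_le_iff)
  have "emeasure lborel (strip v) = emeasure (lborel \<Otimes>\<^sub>M lborel) (strip v)"
    by (simp add: lborel_prod)
  also have "\<dots> = (\<integral>\<^sup>+ t. emeasure lborel (Pair t -` strip v) \<partial>lborel)"
    using strip_sets[of v] by (intro lborel.emeasure_pair_measure_alt) (simp only: lborel_prod)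
  also have "\<dots> = (\<integral>\<^sup>+ t. ennreal 2 * indicator {0..pi} t \<partial>lborel)"
    unfolding slice by (intro nn_integral_cong) (auto simp: indicator_def)
  also have "\<dots> = ennreal (2 * pi)"
    by (simp add: nn_integral_cmult_indicator ennreal_mult)
  finally show ?thesis .
qed

lemma line_meets_segment_in_strip:
  assumes "z \<in> line \<theta> \<rho> \<inter> closed_segment v w" "norm (w - v) \<le> 1" "0 \<le> \<theta>" "\<theta> \<le> pi"
  shows "(\<theta>, \<rho>) \<in> strip v"
proof -
  have "norm (z - v) \<le> 1"
    using assms(1,2) segment_bound1 order.trans by blast
  then have "\<bar>(z - v) \<bullet> cis \<theta>\<bar> \<le> 1"
    using Cauchy_Schwarz_ineq2[of "z - v" "cis \<theta>"] by simp
  then show ?thesis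
    using assms by (simp add: strip_def line_eq inner_diff_left)
qed

lemma card_convex_inter_segment:
  fixes C :: "'a::euclidean_space set"
  assumes "convex C" "finite (C \<inter> closed_segment a b)"
  shows "card (C \<inter> closed_segment a b) \<le> 1"
proof -
  have "x = y" if "x \<in> C \<inter> closed_segment a b" "y \<in> C \<inter> closed_segment a b" for x y
  proof -
    have "closed_segment x y \<subseteq> C \<inter> closed_segment a b"
      using that assms(1) by (intro closed_segment_subset convex_Int convex_closed_segment) auto
    then have "finite (closed_segment x y)"
      using assms(2) finite_subset by blast
    then show "x = y"
      by simp
  qed
  then show ?thesis
    using card_le_Suc0_iff_eq[OF assms(2)] by auto
qed

lemma convex_line: "convex (line \<theta> \<rho>)"
  unfolding line_eq using convex_hyperplane[of "cis \<theta>" \<rho>] by (simp add: inner_commute)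

lemma card_line_path_set:
  assumes "0 \<le> \<theta>" "\<theta> \<le> pi" and fin: "finite (line \<theta> \<rho> \<inter> path_set w)"
  shows "real (card (line \<theta> \<rho> \<inter> path_set w)) \<le>
    (\<Sum>i\<le>length w. indicator (strip (vert w i)) (\<theta>, \<rho>))"
proof -
  let ?S = "\<lambda>i. line \<theta> \<rho> \<inter> closed_segment (vert w i) (vert w (Suc i))"
  have eq: "line \<theta> \<rho> \<inter> path_set w = (\<Union>i\<le>length w. ?S i)"
    by (auto simp: path_set_def)
  have fin_S: "finite (?S i)" if "i \<le> length w" for i
    using fin unfolding eq by (rule finite_subset[rotated]) (use that in auto)
  have "card (line \<theta> \<rho> \<inter> path_set w) \<le> (\<Sum>i\<le>length w. card (?S i))"
    unfolding eq using fin_S by (intro card_UN_le) auto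
  then have "real (card (line \<theta> \<rho> \<inter> path_set w)) \<le> (\<Sum>i\<le>length w. real (card (?S i)))"
    by (metis of_nat_le_iff of_nat_sum)
  also have "\<dots> \<le> (\<Sum>i\<le>length w. indicator (strip (vert w i)) (\<theta>, \<rho>))"
  proof (rule sum_mono)
    fix i
    assume i: "i \<in> {..length w}"
    have "norm (vert w (Suc i) - vert w i) \<le> 1"
      by (simp add: vert_Suc norm_heading)
    then have "?S i \<noteq> {} \<Longrightarrow> (\<theta>, \<rho>) \<in> strip (vert w i)"
      using line_meets_segment_in_strip assms(1,2) by blast
    moreover have "card (?S i) \<le> 1"
      using card_convex_inter_segment[OF convex_line] fin_S i by auto
    ultimately show "real (card (?S i)) \<le> indicator (strip (vert w i)) (\<theta>, \<rho>)"
      by (cases "?S i = {}") auto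
  qed
  finally show ?thesis .
qed

lemma sum_disjoint_indicators_le:
  fixes A :: "'i \<Rightarrow> 'a set" and c :: "'i \<Rightarrow> real" and F :: "'a \<Rightarrow> ennreal"
  assumes J: "finite J" and disj: "disjoint_family_on A J"
    and le: "\<And>j x. j \<in> J \<Longrightarrow> x \<in> A j \<Longrightarrow> ennreal (c j) \<le> F x"
  shows "(\<Sum>j\<in>J. ennreal (c j) * indicator (A j) x) \<le> F x"
proof (cases "\<exists>j\<in>J. x \<in> A j")
  case True
  then obtain j0 where j0: "j0 \<in> J" "x \<in> A j0"
    by blast
  have "x \<notin> A j" if "j \<in> J - {j0}" for j
    using disj j0 that unfolding disjoint_family_on_def by blast
  then have "(\<Sum>j\<in>J. ennreal (c j) * indicator (A j) x) = ennreal (c j0)"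
    using J j0 by (subst sum.remove[of J j0]) (auto intro!: sum.neutral)
  then show ?thesis
    using le j0 by simp
next
  case False
  then show ?thesis
    by (simp add: indicator_def)
qed

text \<open>Integrating: \<open>\<Sum> c\<^sub>j \<mu>(A\<^sub>j) \<le> \<integral> F d\<mu>\<close>, with the convention that non-measurable
  sets have measure \<open>0\<close>.\<close>
lemma sum_weighted_measure_le_nn_integral:
  fixes A :: "'i \<Rightarrow> 'a set" and c :: "'i \<Rightarrow> real" and F :: "'a \<Rightarrow> ennreal"
  assumes J: "finite J" and disj: "disjoint_family_on A J" and c: "\<And>j. j \<in> J \<Longrightarrow> 0 \<le> c j"
    and F: "F \<in> borel_measurable M" and le: "\<And>j x. j \<in> J \<Longrightarrow> x \<in> A j \<Longrightarrow> ennreal (c j) \<le> F x"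
  shows "ennreal (\<Sum>j\<in>J. c j * measure M (A j)) \<le> integral\<^sup>N M F"
proof -
  define J' where "J' = {j \<in> J. A j \<in> sets M}"
  have J': "finite J'" "J' \<subseteq> J"
    using J by (auto simp: J'_def)
  have "(\<Sum>j\<in>J. c j * measure M (A j)) = (\<Sum>j\<in>J'. c j * measure M (A j))"
    using J' J by (intro sum.mono_neutral_right) (auto simp: J'_def measure_notin_sets)
  then have "ennreal (\<Sum>j\<in>J. c j * measure M (A j)) = (\<Sum>j\<in>J'. ennreal (c j * measure M (A j)))"
    using J' c by (simp add: sum_ennreal subset_iff)
  also have "\<dots> \<le> (\<Sum>j\<in>J'. ennreal (c j) * emeasure M (A j))"
  proof (intro sum_mono)
    fix j
    assume "j \<in> J'"
    have "ennreal (measure M (A j)) \<le> emeasure M (A j)"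
      by (cases "emeasure M (A j) = \<infinity>") (auto simp: measure_def ennreal_enn2real_if)
    moreover have "0 \<le> c j"
      using c \<open>j \<in> J'\<close> J' by auto
    ultimately show "ennreal (c j * measure M (A j)) \<le> ennreal (c j) * emeasure M (A j)"
      by (simp add: ennreal_mult mult_left_mono)
  qed
  also have "\<dots> = (\<integral>\<^sup>+ x. (\<Sum>j\<in>J'. ennreal (c j) * indicator (A j) x) \<partial>M)"
    by (subst nn_integral_sum) (auto simp: J'_def nn_integral_cmult_indicator)
  also have "\<dots> \<le> integral\<^sup>N M F"
    using J' disj le by (intro nn_integral_mono sum_disjoint_indicators_le)
      (auto intro: disjoint_family_on_mono)
  finally show ?thesis .
qed

text \<open>Gibbs' inequality for a single term, from \<open>ln x \<le> x - 1\<close>.\<close>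
lemma neg_xlnx_le:
  fixes p r :: real
  assumes "0 \<le> p" "0 < r"
  shows "- (p * ln p) \<le> r - p - p * ln r"
proof (cases "p = 0")
  case False
  then have p: "0 < p"
    using assms by simp
  have "p * ln (r / p) \<le> p * (r / p - 1)"
    using p assms by (intro mult_left_mono ln_le_minus_one) auto
  then show ?thesis
    using p assms by (simp add: ln_div right_diff_distrib)
qed (use assms in simp)

text \<open>Compare
  with the geometric distribution \<open>g\<^sub>i = r\<^sup>i / \<mu>\<close>, \<open>r = 1 - 1/\<mu>\<close>.\<close>
lemma entropy_le_ln_mean:
  fixes p :: "nat \<Rightarrow> real" and \<mu> :: real
  assumes p0: "\<And>i. 0 \<le> p i" and total: "(\<Sum>i<N. p i) \<le> 1"
    and mean: "(\<Sum>i<N. real (i + 1) * p i) \<le> \<mu>" and \<mu>: "2 \<le> \<mu>"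
  shows "- (\<Sum>i<N. p i * ln (p i)) \<le> 3 + ln \<mu>"
proof -
  define r where "r = 1 - 1 / \<mu>"
  have r: "1 / 2 \<le> r" "r < 1"
    using \<mu> by (auto simp: r_def field_simps)
  define g where "g i = r ^ i / \<mu>" for i
  have ln_g: "- ln (g i) = ln \<mu> + real i * (- ln r)" for i
    using r \<mu> by (simp add: g_def ln_div ln_realpow)
  have term_le: "- (p i * ln (p i)) \<le> g i - p i + p i * (ln \<mu> + real i * (- ln r))" for i
  proof -
    have "0 < g i"
      using r \<mu> by (simp add: g_def)
    then have "- (p i * ln (p i)) \<le> g i - p i + p i * (- ln (g i))"
      using neg_xlnx_le[OF p0] by simp
    then show ?thesis
      by (simp only: ln_g)
  qed
  have "- (\<Sum>i<N. p i * ln (p i)) \<le> (\<Sum>i<N. g i - p i + p i * (ln \<mu> + real i * (- ln r)))"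
    unfolding sum_negf[symmetric] by (intro sum_mono term_le)
  also have "\<dots> = (\<Sum>i<N. (g i - p i) + (ln \<mu> * p i + (- ln r) * (real i * p i)))"
    by (intro sum.cong) (simp_all add: algebra_simps)
  also have "\<dots> = (\<Sum>i<N. g i) - (\<Sum>i<N. p i) + ln \<mu> * (\<Sum>i<N. p i) + (- ln r) * (\<Sum>i<N. real i * p i)"
    by (simp only: sum.distrib sum_subtractf sum_distrib_left add.assoc)
  also have "\<dots> \<le> 1 + ln \<mu> + 2"
  proof -
    have "(\<Sum>i<N. g i) = (\<Sum>i<N. r ^ i) / \<mu>"
      by (simp add: g_def sum_divide_distrib)
    also have "\<dots> = (1 - r ^ N) / (1 - r) / \<mu>"
      using r by (simp add: sum_gp_strict)
    also have "\<dots> = 1 - r ^ N"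
      using \<mu> by (simp add: r_def)
    finally have g: "(\<Sum>i<N. g i) \<le> 1"
      using r by simp
    have ps: "0 \<le> (\<Sum>i<N. p i)"
      using p0 by (simp add: sum_nonneg)
    have "ln \<mu> * (\<Sum>i<N. p i) \<le> ln \<mu>"
      using \<mu> total ps by (simp add: mult_left_le)
    moreover have "(\<Sum>i<N. real i * p i) \<le> \<mu>"
    proof -
      have "(\<Sum>i<N. real i * p i) \<le> (\<Sum>i<N. real (i + 1) * p i)"
        using p0 by (intro sum_mono mult_right_mono) auto
      then show ?thesis
        using mean by linarith
    qed
    moreover have "- ln r \<le> 1 / (\<mu> - 1)"
      using ln_le_minus_one[of "1 / r"] r \<mu> by (simp add: ln_div r_def field_simps)
    ultimately have "(- ln r) * (\<Sum>i<N. real i * p i) \<le> 1 / (\<mu> - 1) * \<mu>"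
      using r p0 \<mu> by (intro mult_mono) (auto intro: sum_nonneg)
    also have "\<dots> \<le> 2"
      using \<mu> by (simp add: field_simps)
    finally have "(- ln r) * (\<Sum>i<N. real i * p i) \<le> 2" .
    then show ?thesis
      using g ps \<open>ln \<mu> * (\<Sum>i<N. p i) \<le> ln \<mu>\<close> by linarith
  qed
  finally show ?thesis
    by simp
qed

lemma limsup_div_le:
  fixes f :: "nat \<Rightarrow> real"
  assumes "\<And>n. f n \<le> C + real n * a"
  shows "limsup (\<lambda>n. ereal (f n / real n)) \<le> ereal a"
proof -
  have "\<forall>\<^sub>F n in sequentially. ereal (f n / real n) \<le> ereal (a + C * (1 / real n))"
    using eventually_ge_at_top[of "1::nat"]
  proof eventually_elim
    case (elim n)
    then have "f n / real n \<le> (C + real n * a) / real n"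
      using assms by (intro divide_right_mono) auto
    also have "\<dots> = a + C * (1 / real n)"
      using elim by (simp add: field_simps)
    finally show ?case
      by simp
  qed
  then have "limsup (\<lambda>n. ereal (f n / real n)) \<le> limsup (\<lambda>n. ereal (a + C * (1 / real n)))"
    by (rule Limsup_mono)
  also have "\<dots> = ereal a"
  proof (rule lim_imp_Limsup)
    have "(\<lambda>n. a + C * (1 / real n)) \<longlonglongrightarrow> a + C * 0"
      by (intro tendsto_intros lim_inverse_n')
    then show "(\<lambda>n. ereal (a + C * (1 / real n))) \<longlonglongrightarrow> ereal a"
      by (simp add: lim_ereal)
  qed simp
  finally show ?thesis .
qed

section \<open>The entropy \<open>h\<^sub>n\<close>\<close>

definition crossing_lines :: "nat \<Rightarrow> nat \<Rightarrow> (real \<times> real) set" where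
  "crossing_lines n j = {(\<theta>, \<rho>) \<in> meeting_lines n.
     finite (line \<theta> \<rho> \<inter> Pi_poly n) \<and> card (line \<theta> \<rho> \<inter> Pi_poly n) = j}"

lemma pj_eq: "pj n j = measure lborel (crossing_lines n j) / measure lborel (meeting_lines n)"
  by (simp add: pj_def crossing_lines_def)

lemma crossing_lines_disjoint: "disjoint_family_on (\<lambda>i. crossing_lines n (Suc i)) J"
  by (auto simp: disjoint_family_on_def crossing_lines_def)

lemma crossing_lines_count:
  assumes "x \<in> crossing_lines n j"
  shows "real j \<le> (\<Sum>i\<le>length (polygon_word n). indicator (strip (vert (polygon_word n) i)) x)"
  using assms card_line_path_set
  by (auto simp: crossing_lines_def meeting_lines_def Pi_poly_eq)

lemma crossing_lines_empty:
  assumes "length (polygon_word n) + 1 < j"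
  shows "crossing_lines n j = {}"
proof (rule ccontr)
  assume "crossing_lines n j \<noteq> {}"
  then obtain x where "x \<in> crossing_lines n j"
    by blast
  then have "real j \<le> (\<Sum>i\<le>length (polygon_word n). indicator (strip (vert (polygon_word n) i)) x)"
    by (rule crossing_lines_count)
  also have "\<dots> \<le> (\<Sum>i\<le>length (polygon_word n). 1)"
    by (intro sum_mono) (simp add: indicator_def)
  finally show False
    using assms by simp
qed

text \<open>Only the intersection numbers \<open>1, \<dots>, |\<Pi>\<^sub>n|\<close> occur, so \<open>h\<^sub>n\<close> is a finite sum.\<close>
lemma hn_finite_sum:
  "hn n = - (\<Sum>i<length (polygon_word n) + 1. pj n (Suc i) * ln (pj n (Suc i)))"
proof -
  have "pj n (Suc i) * ln (pj n (Suc i)) = 0" if "i \<notin> {..<length (polygon_word n) + 1}" for i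
    using crossing_lines_empty[of n "Suc i"] that by (simp add: pj_eq)
  then show ?thesis
    unfolding hn_def by (subst suminf_finite[of "{..<length (polygon_word n) + 1}"]) auto
qed

lemma crossing_total:
  assumes pos: "measure lborel (meeting_lines n) > 0"
  shows "(\<Sum>i<length (polygon_word n) + 1. pj n (Suc i)) \<le> 1"
proof -
  let ?M = "measure lborel (meeting_lines n)"
  have sets: "meeting_lines n \<in> sets lborel" and fin: "emeasure lborel (meeting_lines n) \<noteq> \<infinity>"
    using pos measure_notin_sets by (fastforce simp: measure_def)+
  have "ennreal (\<Sum>i<length (polygon_word n) + 1. 1 * measure lborel (crossing_lines n (Suc i)))
      \<le> integral\<^sup>N lborel (indicator (meeting_lines n))"
    using sets by (intro sum_weighted_measure_le_nn_integral crossing_lines_disjoint)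
      (auto simp: crossing_lines_def)
  also have "\<dots> = ennreal ?M"
    using sets fin by (simp add: emeasure_eq_ennreal_measure)
  finally have "(\<Sum>i<length (polygon_word n) + 1. measure lborel (crossing_lines n (Suc i))) \<le> ?M"
    using pos by (simp add: ennreal_le_iff)
  then show ?thesis
    using pos by (simp add: pj_eq sum_divide_distrib[symmetric] divide_le_eq del: sum.lessThan_Suc)
qed

lemma crossing_mean:
  assumes pos: "measure lborel (meeting_lines n) > 0"
  shows "(\<Sum>i<length (polygon_word n) + 1. real (i + 1) * pj n (Suc i))
           \<le> 8 * pi * length (q (3*n + 1)) / measure lborel (meeting_lines n)"
proof -
  let ?w = "polygon_word n"
  define F where "F x = (\<Sum>k\<le>length ?w. indicator (strip (vert ?w k)) x :: ennreal)" for x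
  have "ennreal (\<Sum>i<length ?w + 1. real (Suc i) * measure lborel (crossing_lines n (Suc i)))
      \<le> integral\<^sup>N lborel F"
  proof (intro sum_weighted_measure_le_nn_integral crossing_lines_disjoint)
    show "F \<in> borel_measurable lborel"
      unfolding F_def using strip_sets by (intro borel_measurable_sum) auto
    fix i x
    assume "x \<in> crossing_lines n (Suc i)"
    then have "ennreal (real (Suc i)) \<le> ennreal (\<Sum>k\<le>length ?w. indicator (strip (vert ?w k)) x)"
      by (intro ennreal_leI crossing_lines_count)
    then show "ennreal (real (Suc i)) \<le> F x"
      unfolding F_def by (subst (asm) sum_ennreal[symmetric]) (auto simp: ennreal_indicator)
  qed auto
  also have "integral\<^sup>N lborel F = (\<Sum>k\<le>length ?w. emeasure lborel (strip (vert ?w k)))"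
    unfolding F_def using strip_sets by (subst nn_integral_sum) (auto simp: nn_integral_indicator)
  also have "\<dots> = ennreal (real (length ?w + 1) * (2 * pi))"
    by (simp add: emeasure_strip ennreal_mult ennreal_of_nat_eq_real_of_nat del: of_nat_Suc)
  also have "\<dots> = ennreal (8 * pi * length (q (3*n + 1)))"
    unfolding length_polygon_word by simp
  finally have "(\<Sum>i<length ?w + 1. real (Suc i) * measure lborel (crossing_lines n (Suc i)))
      \<le> 8 * pi * length (q (3*n + 1))"
    by (simp add: ennreal_le_iff del: of_nat_Suc)
  then show ?thesis
    using pos by (simp add: pj_eq sum_divide_distrib[symmetric] divide_right_mono del: sum.lessThan_Suc)
qed

text \<open>The mean intersection number grows at most like \<open>((2 + \<surd>5) / (1 + \<surd>2))\<^sup>n\<close>: the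
  length of \<open>\<Pi>\<^sub>n\<close> grows like \<open>\<phi>\<^sup>3\<^sup>n = (2 + \<surd>5)\<^sup>n\<close>, the measure of lines meeting it like
  \<open>(1 + \<surd>2)\<^sup>n\<close>.\<close>
lemma mean_crossing_growth:
  assumes pos: "measure lborel (meeting_lines n) > 0"
  shows "8 * pi * length (q (3*n + 1)) / measure lborel (meeting_lines n)
           \<le> 192 * phi / (sqrt 3 - 1) * ((2 + sqrt 5) / (1 + sqrt 2)) ^ n"
proof -
  define X where "X = (1 + sqrt 2) ^ n"
  have X: "0 < X"
    by (simp add: X_def add_pos_nonneg)
  have c: "0 < sqrt 3 - 1"
    using real_sqrt_less_mono[of 1 3] by simp
  have "pi * (sqrt 3 - 1) * X / 24 \<le> pi / 6 * ((sqrt 3 - 1) / 2 * pell (Suc n))"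
    using pell_growth[of n] c by (simp add: X_def)
  also have "\<dots> \<le> measure lborel (meeting_lines n)"
    using measure_meeting_lines_ge[OF pos] .
  finally have M: "pi * (sqrt 3 - 1) * X / 24 \<le> measure lborel (meeting_lines n)" .
  have "real (length (q (3*n + 1))) \<le> phi * (2 + sqrt 5) ^ n"
    using length_q_le[of "3*n + 1"] by (simp add: power_add power_mult phi_cubed)
  then have "8 * pi * length (q (3*n + 1)) / measure lborel (meeting_lines n)
      \<le> 8 * pi * (phi * (2 + sqrt 5) ^ n) / (pi * (sqrt 3 - 1) * X / 24)"
    using M X c pos by (intro frac_le mult_left_mono) auto
  also have "\<dots> = 192 * phi / (sqrt 3 - 1) * ((2 + sqrt 5) ^ n / X)"
    using X c by (simp add: field_simps)
  also have "\<dots> = 192 * phi / (sqrt 3 - 1) * ((2 + sqrt 5) / (1 + sqrt 2)) ^ n"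
    by (simp add: X_def power_divide)
  finally show ?thesis .
qed

lemma hn_linear_bound:
  "\<exists>C. \<forall>n. hn n \<le> C + real n * ln ((2 + sqrt 5) / (1 + sqrt 2))"
proof -
  define \<rho> where "\<rho> = (2 + sqrt 5) / (1 + sqrt 2)"
  define C0 where "C0 = 192 * phi / (sqrt 3 - 1)"
  have "sqrt 2 \<le> sqrt 5"
    by simp
  then have "sqrt 2 \<le> 1 + sqrt 5"
    by linarith
  then have \<rho>: "1 \<le> \<rho>"
    by (simp add: \<rho>_def add_pos_nonneg)
  have C0: "0 \<le> C0"
    using real_sqrt_le_mono[of 1 3] by (simp add: C0_def phi_def)
  have "hn n \<le> (3 + ln (2 + C0)) + real n * ln \<rho>" for n
  proof (cases "measure lborel (meeting_lines n) > 0")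
    case True
    define \<mu> where "\<mu> = max 2 (8 * pi * length (q (3*n + 1)) / measure lborel (meeting_lines n))"
    have hn: "hn n \<le> 3 + ln \<mu>"
      unfolding hn_finite_sum using crossing_total[OF True] crossing_mean[OF True]
      by (intro entropy_le_ln_mean) (auto simp: pj_eq \<mu>_def)
    have "\<mu> \<le> (2 + C0) * \<rho> ^ n"
    proof -
      have "8 * pi * length (q (3*n + 1)) / measure lborel (meeting_lines n) \<le> C0 * \<rho> ^ n"
        using mean_crossing_growth[OF True] by (simp add: C0_def \<rho>_def)
      moreover have "1 \<le> \<rho> ^ n" "0 \<le> C0 * \<rho> ^ n"
        using \<rho> C0 by simp_all
      ultimately show ?thesis
        unfolding \<mu>_def distrib_right by (intro max.boundedI; linarith)
    qed
    then have "ln \<mu> \<le> ln ((2 + C0) * \<rho> ^ n)"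
      by (simp add: \<mu>_def)
    also have "\<dots> = ln (2 + C0) + real n * ln \<rho>"
      using C0 \<rho> by (simp add: ln_mult ln_realpow)
    finally have "ln \<mu> \<le> ln (2 + C0) + real n * ln \<rho>" .
    then show ?thesis
      using hn by simp
  next
    case False
    then have "hn n = 0"
      using measure_nonneg[of lborel "meeting_lines n"] by (simp add: hn_def pj_def)
    then show ?thesis
      using C0 \<rho> by simp
  qed
  then show ?thesis
    unfolding \<rho>_def by blast
qed

theorem theorem3:
  shows "limsup (\<lambda>n. ereal (hn n / real n)) \<le> ereal (ln ((2 + sqrt 5) / (1 + sqrt 2)))"
proof -
  obtain C where "\<And>n. hn n \<le> C + real n * ln ((2 + sqrt 5) / (1 + sqrt 2))"
    using hn_linear_bound by blast
  then show ?thesis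
    by (rule limsup_div_le)
qed

end
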